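(* Let $\overline{M}\in\{1,2,\dots\}\cup\{\infty\}$. In the random coefficients perturbed utility model described in the context, suppose that Assumptions 1–6 (as stated in the context) hold for each natural number $M\le\overline{M}$, and that the distribution $\nu$ of $\beta$ is determined by its moments of order at most $\overline{M}$ (i.e. any probability distribution having the same moments of all orders $M\le \overline{M}$ equals $\nu$). Then the distribution of $\beta$ is identified.
   Context: Model. There are $K$ goods. For each good $k\in\{1,\dots,K\}$ there is a covariate vector $x_k=(x_{k,1},\dots,x_{k,d_k})'\in\mathbb{R}^{d_k}$ and a random coefficient vector $\beta_k=(\beta_{k,1},\dots,\beta_{k,d_k})'\in\mathbb{R}^{d_k}$; write $x=(x_1',\dots,x_K')'\in\mathbb{R}^{d}$ with $d=\sum_k d_k$, and $\beta=(\beta_1',\dots,\beta_K')'$. Let $\varepsilon$ be an unobservable of unrestricted dimension taking values in a measurable space $E$, let $B\subseteq\mathbb{R}^K$ be a feasibility set and $D:B\times E\to\mathbb{R}\cup\{-\infty\}$ a disturbance. Choices satisfy $Y(x,\beta,\varepsilon)\in\arg\max_{y\in B}\sum_{k=1}^K y_k(\beta_k'x_k)+D(y,\varepsilon)$ (argmax nonempty). The average structural function is $\overline{Y}(x)=\int Y(x,\beta,\varepsilon)\,d\tau(\beta,\varepsilon)$ for a probability measure $\tau$ not depending on $x$; $\overline{Y}_k$ is its $k$-th component. Assumption 1: under $\tau$, $\beta$ and $\varepsilon$ are independent, $\tau=\nu\otimes\mu$, and $\overline{Y}(x)$ is finite. Define $\overline{Y}(x,\beta)=\int Y(x,\beta,\varepsilon)\,d\mu(\varepsilon)$,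 so $\overline{Y}(x)=\int\overline{Y}(x,\beta)\,d\nu(\beta)$. Let $\overline{B}$ be the convex hull of $B$ and $\overline{D}(y)=\sup\{\int D(\tilde Y(\varepsilon),\varepsilon)\,d\mu(\varepsilon):\tilde Y:E\to B\text{ measurable},\ \int\tilde Y\,d\mu=y\}$ ($\sup\emptyset=-\infty$). Assumption 2: (i) $\overline{Y}(x,\beta)$ equals (is the unique element of) $\arg\max_{y\in\overline{B}}\sum_k y_k(\beta_k'x_k)+\overline{D}(y)$; (ii) $\overline{B}$ is nonempty, closed, convex; (iii) $\overline{D}:\mathbb{R}^K\to\mathbb{R}\cup\{-\infty\}$ is concave, upper semicontinuous, finite at some $y\in\overline{B}$. Define $V(u)=\max_{y\in\overline{B}}\sum_k y_ku_k+\overline{D}(y)$, $u\in\mathbb{R}^K$, and $\partial_\gamma V=\partial_{\gamma_1}\cdots\partial_{\gamma_m}V$ for $\gamma\in\{1,\dots,K\}^m$. Assumption 3: all covariates are continuous, and each $x_k$ is specific to good $k$ (enters only $\beta_k'x_k$). Assumption 4 (for $M$): $\int\beta_{1,1}^M\,d\nu$ is finite, known a priori, and nonzero. Assumption 5 (for $M$): (i) for each $k$ and every $M$-th order partial derivative, $\partial_{x_{k_1,\ell_1}}\cdots\partial_{x_{k_M,\ell_M}}\overline{Y}_k(0)=\int\partial_{x_{k_1,\ell_1}}\cdots\partial_{x_{k_M,\ell_M}}\overline{Y}_k(0,\beta)\,d\nu(\beta)$; (ii) all $M$-th order moments $\int\beta_{k_1,\ell_1}\cdots\beta_{k_M,\ell_M}\,d\nu$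 exist and are finite; (iii) $V$ is $(M+1)$-times continuously differentiable near $0$; (iv) $\partial_\gamma V(0)\ne0$ for all $\gamma\in\{1,\dots,K\}^{M+1}$; (v) $\overline{Y}(x)$ is known on a neighborhood of $0$, or more generally on $H\cap\mathbb{R}^d_+$ for a neighborhood $H$ of $0$. Assumption 6 (for $M$): for each $(k_1,\dots,k_M)\in\{1,\dots,K\}^M$ there exist $\ell_m\in\{1,\dots,d_{k_m}\}$ with $\int\beta_{k_1,\ell_1}\cdots\beta_{k_M,\ell_M}\,d\nu$ existing and nonzero. Identification: a quantity is identified if it is uniquely determined by the objects assumed known (the average structural function on the stated region and the quantities assumed known a priori), i.e. all specifications $(B,D,\mu,\nu)$ satisfying the hypotheses and generating the same known objects yield the same value. *)

theory Defs
  imports "HOL-Probability.Probability"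
begin

text \<open>Goods are indexed by a finite type 'k, covariates (and random coefficients)
by a finite type 'd; good j is the good to which covariate j belongs, so that
beta_k' x_k is the sum over the covariates j with good j = k of beta_j * x_j.\<close>

definition util :: "('d::finite \<Rightarrow> 'k::finite) \<Rightarrow> real^'d \<Rightarrow> real^'d \<Rightarrow> real^'k" where
  "util good x \<beta> = (\<chi> k. \<Sum>j\<in>{j. good j = k}. \<beta>$j * x$j)"

definition choice_rule ::
  "('d::finite \<Rightarrow> 'k::finite) \<Rightarrow> (real^'k) set \<Rightarrow> (real^'k \<Rightarrow> 'e \<Rightarrow> ereal) \<Rightarrow> 'e measure
   \<Rightarrow> (real^'d \<Rightarrow> real^'d \<Rightarrow> 'e \<Rightarrow> real^'k) \<Rightarrow> bool" where
  "choice_rule good B D \<mu> Y \<longleftrightarrow>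
     (\<forall>x \<beta>. \<forall>\<epsilon>\<in>space \<mu>. Y x \<beta> \<epsilon> \<in> B \<and>
        (\<forall>y\<in>B. ereal (y \<bullet> util good x \<beta>) + D y \<epsilon>
                 \<le> ereal (Y x \<beta> \<epsilon> \<bullet> util good x \<beta>) + D (Y x \<beta> \<epsilon>) \<epsilon>))"

definition ASF :: "(real^'d::finite) measure \<Rightarrow> 'e measure \<Rightarrow> (real^'d \<Rightarrow> real^'d \<Rightarrow> 'e \<Rightarrow> real^'k::finite)
   \<Rightarrow> real^'d \<Rightarrow> real^'k" where
  "ASF \<nu> \<mu> Y x = (\<integral>z. Y x (fst z) (snd z) \<partial>(\<nu> \<Otimes>\<^sub>M \<mu>))"

definition ASFb :: "'e measure \<Rightarrow> (real^'d::finite \<Rightarrow> real^'d \<Rightarrow> 'e \<Rightarrow> real^'k::finite)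
   \<Rightarrow> real^'d \<Rightarrow> real^'d \<Rightarrow> real^'k" where
  "ASFb \<mu> Y x \<beta> = (\<integral>\<epsilon>. Y x \<beta> \<epsilon> \<partial>\<mu>)"

definition qint :: "'e measure \<Rightarrow> ('e \<Rightarrow> ereal) \<Rightarrow> ereal" where
  "qint \<mu> f = enn2ereal (\<integral>\<^sup>+\<epsilon>. e2ennreal (f \<epsilon>) \<partial>\<mu>) - enn2ereal (\<integral>\<^sup>+\<epsilon>. e2ennreal (- f \<epsilon>) \<partial>\<mu>)"

text \<open>Dbar(y) = sup of int D(Yt(eps),eps) d mu over measurable Yt : E -> B with int Yt d mu = y
  (for which that integral exists); Sup {} = -infinity.\<close>
definition Dbar :: "'e measure \<Rightarrow> (real^'k::finite) set \<Rightarrow> (real^'k \<Rightarrow> 'e \<Rightarrow> ereal) \<Rightarrow> real^'k \<Rightarrow> ereal" where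
  "Dbar \<mu> B D y = Sup {qint \<mu> (\<lambda>\<epsilon>. D (Yt \<epsilon>) \<epsilon>) | Yt.
      Yt \<in> borel_measurable \<mu> \<and> (\<forall>\<epsilon>\<in>space \<mu>. Yt \<epsilon> \<in> B) \<and> integrable \<mu> Yt \<and> (\<integral>\<epsilon>. Yt \<epsilon> \<partial>\<mu>) = y \<and>
      (\<lambda>\<epsilon>. D (Yt \<epsilon>) \<epsilon>) \<in> borel_measurable \<mu> \<and>
      ((\<integral>\<^sup>+\<epsilon>. e2ennreal (D (Yt \<epsilon>) \<epsilon>) \<partial>\<mu>) < \<infinity> \<or> (\<integral>\<^sup>+\<epsilon>. e2ennreal (- D (Yt \<epsilon>) \<epsilon>) \<partial>\<mu>) < \<infinity>)}"

definition Vfun :: "'e measure \<Rightarrow> (real^'k::finite) set \<Rightarrow> (real^'k \<Rightarrow> 'e \<Rightarrow> ereal) \<Rightarrow> real^'k \<Rightarrow> ereal" where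
  "Vfun \<mu> B D u = Sup {ereal (y \<bullet> u) + Dbar \<mu> B D y | y. y \<in> convex hull B}"

primrec ipd :: "'i::finite list \<Rightarrow> (real^'i \<Rightarrow> real) \<Rightarrow> real^'i \<Rightarrow> real" where
  "ipd [] f = f"
| "ipd (i # \<gamma>) f = (\<lambda>x. deriv (\<lambda>t. ipd \<gamma> f (x + t *\<^sub>R axis i 1)) 0)"

primrec ipd_exists :: "'i::finite list \<Rightarrow> (real^'i \<Rightarrow> real) \<Rightarrow> real^'i \<Rightarrow> bool" where
  "ipd_exists [] f x = True"
| "ipd_exists (i # \<gamma>) f x =
     ((\<forall>\<^sub>F t in nhds (0::real). ipd_exists \<gamma> f (x + t *\<^sub>R axis i 1)) \<and>
      (\<lambda>t. ipd \<gamma> f (x + t *\<^sub>R axis i 1)) field_differentiable (at (0::real)))"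

definition Ck_near :: "nat \<Rightarrow> (real^'i::finite \<Rightarrow> real) \<Rightarrow> real^'i \<Rightarrow> bool" where
  "Ck_near m f a \<longleftrightarrow> (\<exists>N. open N \<and> a \<in> N \<and>
     (\<forall>\<gamma>::'i list. length \<gamma> \<le> m \<longrightarrow> (\<forall>u\<in>N. ipd_exists \<gamma> f u) \<and> continuous_on N (ipd \<gamma> f)))"

definition mono_fn :: "'d::finite list \<Rightarrow> real^'d \<Rightarrow> real" where
  "mono_fn \<gamma> \<beta> = (\<Prod>j\<leftarrow>\<gamma>. \<beta>$j)"

definition assm1 :: "(real^'d::finite) measure \<Rightarrow> 'e measure \<Rightarrow> (real^'d \<Rightarrow> real^'d \<Rightarrow> 'e \<Rightarrow> real^'k::finite) \<Rightarrow> bool" where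
  "assm1 \<nu> \<mu> Y \<longleftrightarrow> prob_space \<nu> \<and> prob_space \<mu> \<and> sets \<nu> = sets borel \<and>
     (\<forall>x. integrable (\<nu> \<Otimes>\<^sub>M \<mu>) (\<lambda>z. Y x (fst z) (snd z)))"

definition assm2 :: "('d::finite \<Rightarrow> 'k::finite) \<Rightarrow> (real^'k) set \<Rightarrow> (real^'k \<Rightarrow> 'e \<Rightarrow> ereal) \<Rightarrow> 'e measure
   \<Rightarrow> (real^'d \<Rightarrow> real^'d \<Rightarrow> 'e \<Rightarrow> real^'k) \<Rightarrow> bool" where
  "assm2 good B D \<mu> Y \<longleftrightarrow>
     (\<forall>x \<beta>. {y \<in> convex hull B. \<forall>z \<in> convex hull B.
               ereal (z \<bullet> util good x \<beta>) + Dbar \<mu> B D z \<le> ereal (y \<bullet> util good x \<beta>) + Dbar \<mu> B D y}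
             = {ASFb \<mu> Y x \<beta>}) \<and>
     convex hull B \<noteq> {} \<and> closed (convex hull B) \<and>
     (\<forall>y z t. 0 < t \<and> t < 1 \<longrightarrow>
        ereal t * Dbar \<mu> B D y + ereal (1 - t) * Dbar \<mu> B D z \<le> Dbar \<mu> B D (t *\<^sub>R y + (1 - t) *\<^sub>R z)) \<and>
     (\<forall>y c. Dbar \<mu> B D y < c \<longrightarrow> (\<forall>\<^sub>F z in at y. Dbar \<mu> B D z < c)) \<and>
     (\<forall>y. Dbar \<mu> B D y \<noteq> \<infinity>) \<and>
     (\<exists>y\<in>convex hull B. Dbar \<mu> B D y \<noteq> -\<infinity>)"

definition assm4 :: "nat \<Rightarrow> 'd::finite \<Rightarrow> (real^'d) measure \<Rightarrow> bool" where
  "assm4 M j0 \<nu> \<longleftrightarrow> integrable \<nu> (\<lambda>\<beta>. (\<beta>$j0) ^ M) \<and> (\<integral>\<beta>. (\<beta>$j0) ^ M \<partial>\<nu>) \<noteq> 0"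

definition assm5 :: "nat \<Rightarrow> (real^'k::finite) set \<Rightarrow> (real^'k \<Rightarrow> 'e \<Rightarrow> ereal) \<Rightarrow> 'e measure
   \<Rightarrow> (real^'d::finite) measure \<Rightarrow> (real^'d \<Rightarrow> real^'d \<Rightarrow> 'e \<Rightarrow> real^'k) \<Rightarrow> bool" where
  "assm5 M B D \<mu> \<nu> Y \<longleftrightarrow>
     (\<forall>k. \<forall>\<gamma>::'d list. length \<gamma> = M \<longrightarrow>
        ipd_exists \<gamma> (\<lambda>x. ASF \<nu> \<mu> Y x $ k) 0 \<and>
        (\<forall>\<beta>. ipd_exists \<gamma> (\<lambda>x. ASFb \<mu> Y x \<beta> $ k) 0) \<and>
        integrable \<nu> (\<lambda>\<beta>. ipd \<gamma> (\<lambda>x. ASFb \<mu> Y x \<beta> $ k) 0) \<and>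
        ipd \<gamma> (\<lambda>x. ASF \<nu> \<mu> Y x $ k) 0 = (\<integral>\<beta>. ipd \<gamma> (\<lambda>x. ASFb \<mu> Y x \<beta> $ k) 0 \<partial>\<nu>)) \<and>
     (\<forall>\<gamma>::'d list. length \<gamma> = M \<longrightarrow> integrable \<nu> (mono_fn \<gamma>)) \<and>
     Ck_near (Suc M) (\<lambda>u. real_of_ereal (Vfun \<mu> B D u)) 0 \<and>
     (\<forall>\<gamma>::'k list. length \<gamma> = Suc M \<longrightarrow> ipd \<gamma> (\<lambda>u. real_of_ereal (Vfun \<mu> B D u)) 0 \<noteq> 0)"

definition assm6 :: "nat \<Rightarrow> ('d::finite \<Rightarrow> 'k::finite) \<Rightarrow> (real^'d) measure \<Rightarrow> bool" where
  "assm6 M good \<nu> \<longleftrightarrow> (\<forall>ks::'k list. length ks = M \<longrightarrow>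
     (\<exists>\<gamma>. map good \<gamma> = ks \<and> integrable \<nu> (mono_fn \<gamma>) \<and> (\<integral>\<beta>. mono_fn \<gamma> \<beta> \<partial>\<nu>) \<noteq> 0))"

text \<open>A specification (B, D, mu, nu, Y) of the model satisfying Assumptions 1-6 for every
  natural number 1 <= M <= Mbar (Assumption 3 is built into the index structure).\<close>
definition spec_ok ::
  "('d::finite \<Rightarrow> 'k::finite) \<Rightarrow> 'd \<Rightarrow> enat \<Rightarrow> (real^'k) set \<Rightarrow> (real^'k \<Rightarrow> 'e \<Rightarrow> ereal) \<Rightarrow> 'e measure
   \<Rightarrow> (real^'d) measure \<Rightarrow> (real^'d \<Rightarrow> real^'d \<Rightarrow> 'e \<Rightarrow> real^'k) \<Rightarrow> bool" where
  "spec_ok good j0 Mbar B D \<mu> \<nu> Y \<longleftrightarrow>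
     (\<forall>y\<in>B. \<forall>\<epsilon>\<in>space \<mu>. D y \<epsilon> \<noteq> \<infinity>) \<and>
     choice_rule good B D \<mu> Y \<and>
     assm1 \<nu> \<mu> Y \<and> assm2 good B D \<mu> Y \<and>
     (\<forall>M. 1 \<le> M \<and> enat M \<le> Mbar \<longrightarrow> assm4 M j0 \<nu> \<and> assm5 M B D \<mu> \<nu> Y \<and> assm6 M good \<nu>)"

definition moment_determinate :: "enat \<Rightarrow> (real^'d::finite) measure \<Rightarrow> bool" where
  "moment_determinate Mbar \<nu> \<longleftrightarrow>
     (\<forall>\<nu>'. prob_space \<nu>' \<and> sets \<nu>' = sets borel \<and>
        (\<forall>\<gamma>::'d list. 1 \<le> length \<gamma> \<and> enat (length \<gamma>) \<le> Mbar \<longrightarrow>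
            integrable \<nu>' (mono_fn \<gamma>) \<and> (\<integral>\<beta>. mono_fn \<gamma> \<beta> \<partial>\<nu>') = (\<integral>\<beta>. mono_fn \<gamma> \<beta> \<partial>\<nu>))
        \<longrightarrow> \<nu>' = \<nu>)"

end

theory Submission
  imports Defs
begin

(*
  By the envelope theorem the mean demand of consumers with coefficients beta is the gradient
  of V at the utility index u(x, beta) = (beta_k' x_k)_k. Since u is linear in x with
  du_k/dx_j = beta_j for good j = k, differentiating M times at x = 0 and averaging over beta
  gives  d_gamma Ybar_k(0) = E[beta_gamma] * d_(good gamma) d_k V(0).  The left side is
  identified: one-sided derivatives at 0 only use Ybar on the nonnegative orthant. The
  derivatives of V are symmetric (Schwarz) and nonzero, so the known moment E[beta_j0^M]
  identifies d_(good j0)^M d_k V(0); trading the indices good j0 one at a time for arbitrary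
  goods, each time through a monomial with nonzero mean (Assumption 6), identifies every
  (M+1)-th derivative of V at 0 and then every M-th moment of nu. Moment determinacy concludes.
*)

lemma ipd_append: "ipd (xs @ ys) f = ipd xs (ipd ys f)"
  by (induction xs) auto

lemma ipd_exists_append: "ipd_exists (xs @ ys) f u \<Longrightarrow> ipd_exists xs (ipd ys f) u"
  by (induction xs arbitrary: u) (auto simp: ipd_append elim: eventually_mono)

lemma eventually_nhds_line_in_open:
  fixes v :: "'a::real_normed_vector"
  assumes "open U" "x \<in> U"
  shows "\<forall>\<^sub>F t in nhds (0::real). x + t *\<^sub>R v \<in> U"
proof -
  have "open ((\<lambda>t::real. x + t *\<^sub>R v) -` U)"
    using assms(1) by (intro open_vimage continuous_intros)
  then show ?thesis
    using assms(2) unfolding eventually_nhds by force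
qed

lemma ipd_cong_open:
  assumes "open U" "\<And>x. x \<in> U \<Longrightarrow> f x = g x" "x \<in> U"
  shows "ipd \<gamma> f x = ipd \<gamma> g x"
  using assms(3)
proof (induction \<gamma> arbitrary: x)
  case Nil
  then show ?case using assms(2) by simp
next
  case (Cons i \<gamma>)
  have "\<forall>\<^sub>F t in nhds 0. ipd \<gamma> f (x + t *\<^sub>R axis i 1) = ipd \<gamma> g (x + t *\<^sub>R axis i 1)"
    using eventually_nhds_line_in_open[OF assms(1) Cons.prems, of "axis i 1"]
    by (auto elim!: eventually_mono intro: Cons.IH)
  then show ?case by (simp add: deriv_cong_ev)
qed

lemma ipd_Cons_has_real_derivative:
  assumes "ipd_exists (a # \<gamma>) f (p + s *\<^sub>R axis a 1)"
  shows "((\<lambda>s. ipd \<gamma> f (p + s *\<^sub>R axis a 1)) has_real_derivative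
           ipd (a # \<gamma>) f (p + s *\<^sub>R axis a 1)) (at s)"
proof -
  let ?G = "\<lambda>s. ipd \<gamma> f (p + s *\<^sub>R axis a 1)"
  have shift: "(\<lambda>t. ?G (t + s)) = (\<lambda>t. ipd \<gamma> f ((p + s *\<^sub>R axis a 1) + t *\<^sub>R axis a 1))"
    by (simp add: algebra_simps)
  have "(\<lambda>t. ipd \<gamma> f ((p + s *\<^sub>R axis a 1) + t *\<^sub>R axis a 1)) field_differentiable at 0"
    using assms by simp
  from field_differentiable_derivI[OF this]
  have "((\<lambda>t. ?G (t + s)) has_real_derivative ipd (a # \<gamma>) f (p + s *\<^sub>R axis a 1)) (at 0)"
    unfolding shift by simp
  then show ?thesis
    using DERIV_shift[of ?G _ 0 s] by simp
qed

lemma deriv_eq_if_eventually_eq_at_right: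
  fixes f g :: "real \<Rightarrow> real"
  assumes "f field_differentiable at 0" "g field_differentiable at 0"
    and "\<forall>\<^sub>F t in at_right 0. f t = g t" "f 0 = g 0"
  shows "deriv f 0 = deriv g 0"
proof -
  have quotient_tendsto: "((\<lambda>t. (h t - h 0) / (t - 0)) \<longlongrightarrow> deriv h 0) (at_right 0)"
    if "h field_differentiable at 0" for h :: "real \<Rightarrow> real"
  proof -
    have "((\<lambda>t. (h t - h 0) / (t - 0)) \<longlongrightarrow> deriv h 0) (at 0)"
      using field_differentiable_derivI[OF that] has_field_derivative_iff by blast
    then show ?thesis
      by (rule tendsto_within_subset) auto
  qed
  have "\<forall>\<^sub>F t in at_right 0. (g t - g 0) / (t - 0) = (f t - f 0) / (t - 0)"
    using assms(3,4) by (auto elim!: eventually_mono)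
  from tendsto_cong[OF this] quotient_tendsto[OF assms(2)]
  have "((\<lambda>t. (f t - f 0) / (t - 0)) \<longlongrightarrow> deriv g 0) (at_right 0)"
    by simp
  from tendsto_unique[OF trivial_limit_at_right_real quotient_tendsto[OF assms(1)] this]
  show ?thesis .
qed

lemma ipd_eq_on_orthant:
  fixes f1 f2 :: "real^'n \<Rightarrow> real"
  assumes H: "open H" and eq: "\<And>x. x \<in> H \<Longrightarrow> (\<forall>j. 0 \<le> x$j) \<Longrightarrow> f1 x = f2 x"
    and "x \<in> H" "\<forall>j. 0 \<le> x$j" "ipd_exists \<gamma> f1 x" "ipd_exists \<gamma> f2 x"
  shows "ipd \<gamma> f1 x = ipd \<gamma> f2 x"
  using assms(3-)
proof (induction \<gamma> arbitrary: x)
  case Nil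
  then show ?case using eq by simp
next
  case (Cons i \<gamma>)
  let ?p = "\<lambda>t::real. x + t *\<^sub>R axis i 1"
  have near: "\<forall>\<^sub>F t in nhds 0. ipd_exists \<gamma> f1 (?p t) \<and> ipd_exists \<gamma> f2 (?p t) \<and> ?p t \<in> H"
    using Cons.prems(3,4) eventually_nhds_line_in_open[OF H Cons.prems(1), of "axis i 1"]
    by (simp add: eventually_conj_iff)
  have "\<forall>\<^sub>F t in at_right 0. 0 < t \<and> ipd_exists \<gamma> f1 (?p t) \<and> ipd_exists \<gamma> f2 (?p t) \<and> ?p t \<in> H"
    by (rule eventually_conj[OF eventually_at_right_less filter_leD[OF at_within_le_nhds near]])
  then have right: "\<forall>\<^sub>F t in at_right 0. ipd \<gamma> f1 (?p t) = ipd \<gamma> f2 (?p t)"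
  proof (rule eventually_mono)
    fix t assume t: "0 < t \<and> ipd_exists \<gamma> f1 (?p t) \<and> ipd_exists \<gamma> f2 (?p t) \<and> ?p t \<in> H"
    moreover have "\<forall>j. 0 \<le> ?p t $ j"
      using Cons.prems(2) t by (auto simp: axis_def)
    ultimately show "ipd \<gamma> f1 (?p t) = ipd \<gamma> f2 (?p t)"
      using Cons.IH by blast
  qed
  have at_0: "ipd \<gamma> f1 x = ipd \<gamma> f2 x"
    using Cons.IH Cons.prems eventually_nhds_x_imp_x by fastforce
  have "(\<lambda>t. ipd \<gamma> f1 (?p t)) field_differentiable at 0" "(\<lambda>t. ipd \<gamma> f2 (?p t)) field_differentiable at 0"
    using Cons.prems(3,4) by simp_all
  from deriv_eq_if_eventually_eq_at_right[OF this right] show ?case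
    using at_0 by simp
qed

lemma second_difference_mean_value:
  fixes f :: "real^'n \<Rightarrow> real"
  assumes ex: "\<And>v. v \<in> N \<Longrightarrow> ipd_exists [a] f v \<and> ipd_exists [b, a] f v"
    and h: "0 < h"
    and square: "\<And>s t. 0 \<le> s \<Longrightarrow> s \<le> h \<Longrightarrow> 0 \<le> t \<Longrightarrow> t \<le> h \<Longrightarrow>
                   u + s *\<^sub>R axis a 1 + t *\<^sub>R axis b 1 \<in> N"
  obtains s t where "0 < s" "s < h" "0 < t" "t < h"
    "f (u + h *\<^sub>R axis a 1 + h *\<^sub>R axis b 1) - f (u + h *\<^sub>R axis a 1) - f (u + h *\<^sub>R axis b 1) + f u
       = h * h * ipd [b, a] f (u + s *\<^sub>R axis a 1 + t *\<^sub>R axis b 1)"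
proof -
  let ?ea = "axis a 1 :: real^'n" and ?eb = "axis b 1 :: real^'n"
  define \<phi> where "\<phi> s = f (u + h *\<^sub>R ?eb + s *\<^sub>R ?ea) - f (u + s *\<^sub>R ?ea)" for s
  define \<phi>' where "\<phi>' s = ipd [a] f (u + h *\<^sub>R ?eb + s *\<^sub>R ?ea) - ipd [a] f (u + s *\<^sub>R ?ea)" for s
  have "(\<phi> has_real_derivative \<phi>' s) (at s)" if "0 \<le> s" "s \<le> h" for s
  proof -
    have in_N: "u + h *\<^sub>R ?eb + s *\<^sub>R ?ea \<in> N" "u + s *\<^sub>R ?ea \<in> N"
      using square[of s h] square[of s 0] that h by (simp_all add: add_ac)
    have "((\<lambda>s. ipd [] f (u + h *\<^sub>R ?eb + s *\<^sub>R ?ea)) has_real_derivative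
            ipd [a] f (u + h *\<^sub>R ?eb + s *\<^sub>R ?ea)) (at s)"
      by (rule ipd_Cons_has_real_derivative) (use ex in_N(1) in auto)
    moreover have "((\<lambda>s. ipd [] f (u + s *\<^sub>R ?ea)) has_real_derivative ipd [a] f (u + s *\<^sub>R ?ea)) (at s)"
      by (rule ipd_Cons_has_real_derivative) (use ex in_N(2) in auto)
    ultimately show ?thesis
      unfolding \<phi>_def[abs_def] \<phi>'_def using DERIV_diff by simp
  qed
  from MVT2[OF h this] obtain s where s: "0 < s" "s < h" "\<phi> h - \<phi> 0 = h * \<phi>' s"
    by auto
  define \<psi> where "\<psi> t = ipd [a] f (u + s *\<^sub>R ?ea + t *\<^sub>R ?eb)" for t
  have "(\<psi> has_real_derivative ipd [b, a] f (u + s *\<^sub>R ?ea + t *\<^sub>R ?eb)) (at t)"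
    if "0 \<le> t" "t \<le> h" for t
    unfolding \<psi>_def[abs_def]
    by (rule ipd_Cons_has_real_derivative) (use ex square[of s t] s that in auto)
  from MVT2[OF h this] obtain t where t: "0 < t" "t < h"
    "\<psi> h - \<psi> 0 = h * ipd [b, a] f (u + s *\<^sub>R ?ea + t *\<^sub>R ?eb)"
    by auto
  have "\<phi>' s = \<psi> h - \<psi> 0"
    unfolding \<phi>'_def \<psi>_def by (simp add: add_ac)
  moreover have "\<phi> h - \<phi> 0 = f (u + h *\<^sub>R ?ea + h *\<^sub>R ?eb) - f (u + h *\<^sub>R ?ea) - f (u + h *\<^sub>R ?eb) + f u"
    unfolding \<phi>_def by (simp add: add_ac)
  ultimately show ?thesis
    using that s t by simp
qed

lemma continuous_on_near_coordinate_square: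
  fixes g :: "real^'n \<Rightarrow> 'b::metric_space"
  assumes "open N" "u \<in> N" "continuous_on N g" "0 < e"
  obtains h where "0 < h"
    "\<And>s t a b. 0 \<le> s \<Longrightarrow> s \<le> h \<Longrightarrow> 0 \<le> t \<Longrightarrow> t \<le> h \<Longrightarrow>
       u + s *\<^sub>R axis a 1 + t *\<^sub>R axis b 1 \<in> N \<and> dist (g (u + s *\<^sub>R axis a 1 + t *\<^sub>R axis b 1)) (g u) < e"
proof -
  obtain r where r: "0 < r" "ball u r \<subseteq> N"
    using assms(1,2) openE by blast
  have "isCont g u"
    using assms(1-3) continuous_on_eq_continuous_at by blast
  then obtain d where d: "0 < d" "\<And>v. dist v u < d \<Longrightarrow> dist (g v) (g u) < e"
    using assms(4) continuous_at_eps_delta by blast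
  define h where "h = min r d / 4"
  have "u + s *\<^sub>R axis a 1 + t *\<^sub>R axis b 1 \<in> N \<and> dist (g (u + s *\<^sub>R axis a 1 + t *\<^sub>R axis b 1)) (g u) < e"
    if "0 \<le> s" "s \<le> h" "0 \<le> t" "t \<le> h" for s t and a b :: 'n
  proof -
    have "dist (u + s *\<^sub>R axis a 1 + t *\<^sub>R axis b 1) u = norm (s *\<^sub>R axis a 1 + t *\<^sub>R (axis b 1 :: real^'n))"
      by (simp add: dist_norm)
    also have "\<dots> \<le> \<bar>s\<bar> + \<bar>t\<bar>"
      by (rule order_trans[OF norm_triangle_ineq]) simp
    also have "\<dots> < min r d"
      using that r(1) d(1) by (simp add: h_def)
    finally have "dist (u + s *\<^sub>R axis a 1 + t *\<^sub>R axis b 1) u < min r d" .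
    then show ?thesis
      using r(2) d(2)[of "u + s *\<^sub>R axis a 1 + t *\<^sub>R axis b 1"] by (auto simp: dist_commute)
  qed
  moreover have "0 < h"
    using r(1) d(1) by (simp add: h_def)
  ultimately show ?thesis
    using that by blast
qed

lemma mixed_ipds_meet_in_square:
  fixes f :: "real^'n \<Rightarrow> real"
  assumes ex: "\<And>v. v \<in> N \<Longrightarrow>
               ipd_exists [a] f v \<and> ipd_exists [b] f v \<and> ipd_exists [a, b] f v \<and> ipd_exists [b, a] f v"
    and h: "0 < h"
    and square: "\<And>s t c c'. 0 \<le> s \<Longrightarrow> s \<le> h \<Longrightarrow> 0 \<le> t \<Longrightarrow> t \<le> h \<Longrightarrow>
                   u + s *\<^sub>R axis c 1 + t *\<^sub>R axis c' 1 \<in> N"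
  obtains s1 t1 s2 t2 where "0 < s1" "s1 < h" "0 < t1" "t1 < h" "0 < s2" "s2 < h" "0 < t2" "t2 < h"
    "ipd [b, a] f (u + s1 *\<^sub>R axis a 1 + t1 *\<^sub>R axis b 1) = ipd [a, b] f (u + s2 *\<^sub>R axis b 1 + t2 *\<^sub>R axis a 1)"
proof -
  have "\<And>v. v \<in> N \<Longrightarrow> ipd_exists [a] f v \<and> ipd_exists [b, a] f v"
    using ex by blast
  from second_difference_mean_value[OF this h square]
  obtain s1 t1 where st1: "0 < s1" "s1 < h" "0 < t1" "t1 < h"
    "f (u + h *\<^sub>R axis a 1 + h *\<^sub>R axis b 1) - f (u + h *\<^sub>R axis a 1) - f (u + h *\<^sub>R axis b 1) + f u
       = h * h * ipd [b, a] f (u + s1 *\<^sub>R axis a 1 + t1 *\<^sub>R axis b 1)" .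
  have "\<And>v. v \<in> N \<Longrightarrow> ipd_exists [b] f v \<and> ipd_exists [a, b] f v"
    using ex by blast
  from second_difference_mean_value[OF this h square]
  obtain s2 t2 where st2: "0 < s2" "s2 < h" "0 < t2" "t2 < h"
    "f (u + h *\<^sub>R axis b 1 + h *\<^sub>R axis a 1) - f (u + h *\<^sub>R axis b 1) - f (u + h *\<^sub>R axis a 1) + f u
       = h * h * ipd [a, b] f (u + s2 *\<^sub>R axis b 1 + t2 *\<^sub>R axis a 1)" .
  have "f (u + h *\<^sub>R axis a 1 + h *\<^sub>R axis b 1) - f (u + h *\<^sub>R axis a 1) - f (u + h *\<^sub>R axis b 1) + f u
      = f (u + h *\<^sub>R axis b 1 + h *\<^sub>R axis a 1) - f (u + h *\<^sub>R axis b 1) - f (u + h *\<^sub>R axis a 1) + f u"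
    by (simp add: add_ac)
  then have "h * h * ipd [b, a] f (u + s1 *\<^sub>R axis a 1 + t1 *\<^sub>R axis b 1)
      = h * h * ipd [a, b] f (u + s2 *\<^sub>R axis b 1 + t2 *\<^sub>R axis a 1)"
    using st1(5) st2(5) by (simp del: ipd.simps)
  then show ?thesis
    using that st1(1-4) st2(1-4) h by (simp del: ipd.simps)
qed

theorem ipd_swap_Schwarz:
  fixes f :: "real^'n \<Rightarrow> real"
  assumes N: "open N" "u \<in> N"
    and ex: "\<And>v. v \<in> N \<Longrightarrow>
               ipd_exists [a] f v \<and> ipd_exists [b] f v \<and> ipd_exists [a, b] f v \<and> ipd_exists [b, a] f v"
    and cont: "continuous_on N (ipd [a, b] f)" "continuous_on N (ipd [b, a] f)"
  shows "ipd [a, b] f u = ipd [b, a] f u"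
proof (rule ccontr)
  assume "ipd [a, b] f u \<noteq> ipd [b, a] f u"
  define e where "e = \<bar>ipd [a, b] f u - ipd [b, a] f u\<bar> / 2"
  have e: "0 < e"
    using \<open>ipd [a, b] f u \<noteq> ipd [b, a] f u\<close> by (simp add: e_def)
  obtain h1 where h1: "0 < h1" "\<And>s t c c'. 0 \<le> s \<Longrightarrow> s \<le> h1 \<Longrightarrow> 0 \<le> t \<Longrightarrow> t \<le> h1 \<Longrightarrow>
      u + s *\<^sub>R axis c 1 + t *\<^sub>R axis c' 1 \<in> N \<and>
      dist (ipd [a, b] f (u + s *\<^sub>R axis c 1 + t *\<^sub>R axis c' 1)) (ipd [a, b] f u) < e"
    using continuous_on_near_coordinate_square[OF N cont(1) e] by blast
  obtain h2 where h2: "0 < h2" "\<And>s t c c'. 0 \<le> s \<Longrightarrow> s \<le> h2 \<Longrightarrow> 0 \<le> t \<Longrightarrow> t \<le> h2 \<Longrightarrow>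
      u + s *\<^sub>R axis c 1 + t *\<^sub>R axis c' 1 \<in> N \<and>
      dist (ipd [b, a] f (u + s *\<^sub>R axis c 1 + t *\<^sub>R axis c' 1)) (ipd [b, a] f u) < e"
    using continuous_on_near_coordinate_square[OF N cont(2) e] by blast
  define h where "h = min h1 h2"
  have h: "0 < h" "h \<le> h1" "h \<le> h2"
    using h1(1) h2(1) by (auto simp: h_def)
  have "u + s *\<^sub>R axis c 1 + t *\<^sub>R axis c' 1 \<in> N"
    if "0 \<le> s" "s \<le> h" "0 \<le> t" "t \<le> h" for s t c c'
    using h1(2)[of s t c c'] that h(2) by simp
  from mixed_ipds_meet_in_square[OF ex h(1) this]
  obtain s1 t1 s2 t2 where st: "0 < s1" "s1 < h" "0 < t1" "t1 < h" "0 < s2" "s2 < h" "0 < t2" "t2 < h"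
    and same: "ipd [b, a] f (u + s1 *\<^sub>R axis a 1 + t1 *\<^sub>R axis b 1)
      = ipd [a, b] f (u + s2 *\<^sub>R axis b 1 + t2 *\<^sub>R axis a 1)"
    by blast
  have "dist (ipd [b, a] f (u + s1 *\<^sub>R axis a 1 + t1 *\<^sub>R axis b 1)) (ipd [b, a] f u) < e"
    using h2(2)[of s1 t1 a b] st h by (simp del: ipd.simps)
  moreover have "dist (ipd [a, b] f (u + s2 *\<^sub>R axis b 1 + t2 *\<^sub>R axis a 1)) (ipd [a, b] f u) < e"
    using h1(2)[of s2 t2 b a] st h by (simp del: ipd.simps)
  ultimately have "\<bar>ipd [a, b] f u - ipd [b, a] f u\<bar> < 2 * e"
    using same by (simp add: dist_real_def del: ipd.simps)
  then show False
    by (simp add: e_def del: ipd.simps)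
qed

lemma Ck_near_ipd_swap:
  fixes f :: "real^'n \<Rightarrow> real"
  assumes ck: "Ck_near n f a" and len: "length (pre @ x # y # post) \<le> n"
  shows "ipd (pre @ x # y # post) f a = ipd (pre @ y # x # post) f a"
proof -
  obtain N where N: "open N" "a \<in> N"
    and smooth: "\<And>\<gamma>::'n list. length \<gamma> \<le> n \<Longrightarrow> (\<forall>u\<in>N. ipd_exists \<gamma> f u) \<and> continuous_on N (ipd \<gamma> f)"
    using ck unfolding Ck_near_def by blast
  let ?g = "ipd post f"
  have ex: "ipd_exists zs ?g u" if "u \<in> N" "length zs \<le> 2" for zs u
    using smooth[of "zs @ post"] len that ipd_exists_append[of zs post f u] by auto
  have cont: "continuous_on N (ipd [x, y] ?g)" "continuous_on N (ipd [y, x] ?g)"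
    using smooth[of "[x, y] @ post"] smooth[of "[y, x] @ post"] len unfolding ipd_append by simp_all
  have "ipd [x, y] ?g u = ipd [y, x] ?g u" if "u \<in> N" for u
    by (rule ipd_swap_Schwarz[OF N(1) that _ cont]) (intro conjI ex; simp)
  then have "ipd pre (ipd [x, y] ?g) a = ipd pre (ipd [y, x] ?g) a"
    by (rule ipd_cong_open[OF N(1) _ N(2)])
  then show ?thesis
    unfolding ipd_append[symmetric] by simp
qed

lemma swap_invariant_move_past:
  assumes swap: "\<And>pre x y post. length (pre @ x # y # post) = n \<Longrightarrow> c (pre @ x # y # post) = c (pre @ y # x # post)"
    and "length (pre @ a # ys @ rest) = n"
  shows "c (pre @ a # ys @ rest) = c (pre @ ys @ a # rest)"
  using assms(2)
proof (induction ys arbitrary: pre)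
  case Nil
  then show ?case by simp
next
  case (Cons y ys)
  have "c (pre @ a # y # ys @ rest) = c ((pre @ [y]) @ a # ys @ rest)"
    using swap[of pre a y "ys @ rest"] Cons.prems by simp
  also have "\<dots> = c ((pre @ [y]) @ ys @ a # rest)"
    using Cons.IH[of "pre @ [y]"] Cons.prems by simp
  finally show ?case by simp
qed

lemma swap_invariant_mset_cong:
  assumes swap: "\<And>pre x y post. length (pre @ x # y # post) = n \<Longrightarrow> c (pre @ x # y # post) = c (pre @ y # x # post)"
    and "mset xs = mset ys" "length xs = n"
  shows "c xs = c ys"
proof -
  have "c (pre @ xs) = c (pre @ ys)" if "mset xs = mset ys" "length (pre @ xs) = n" for pre xs ys
    using that
  proof (induction xs arbitrary: pre ys)
    case Nil
    then show ?case by simp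
  next
    case (Cons a xs)
    have "a \<in> set ys"
      using mset_eq_setD[OF Cons.prems(1)] by auto
    then obtain ys1 ys2 where ys: "ys = ys1 @ a # ys2"
      by (meson split_list)
    have "c (pre @ a # xs) = c (pre @ a # ys1 @ ys2)"
      using Cons.IH[of "ys1 @ ys2" "pre @ [a]"] Cons.prems ys by simp
    also have "\<dots> = c (pre @ ys1 @ a # ys2)"
    proof (rule swap_invariant_move_past[of n c, OF swap])
      show "length (pre @ a # ys1 @ ys2) = n"
        using Cons.prems ys mset_eq_length[OF Cons.prems(1)] by simp
    qed
    finally show ?case
      using ys by simp
  qed
  from this[of xs ys "[]"] show ?thesis
    using assms(2,3) by simp
qed

lemma deriv_eq_of_supporting_line:
  fixes h :: "real \<Rightarrow> real"
  assumes "h field_differentiable at 0" "\<And>t. h 0 + t * c \<le> h t"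
  shows "deriv h 0 = c"
proof -
  have "((\<lambda>t. h t - t * c) has_real_derivative (deriv h 0 - 1 * c)) (at 0)"
    by (intro DERIV_diff DERIV_cmult_right DERIV_ident field_differentiable_derivI[OF assms(1)])
  from DERIV_local_min[OF this, of 1] show ?thesis
    using assms(2) by (simp add: algebra_simps)
qed

lemma util_surj:
  fixes good :: "'d::finite \<Rightarrow> 'k::finite"
  assumes "surj good"
  obtains x \<beta> where "util good x \<beta> = u"
proof
  define x :: "real^'d" where "x = (\<chi> j. if j = inv good (good j) then u $ good j else 0)"
  have "util good x (\<chi> j. 1) $ k = u $ k" for k
  proof -
    have "util good x (\<chi> j. 1) $ k = (\<Sum>j\<in>{j. good j = k}. if j = inv good k then u $ k else 0)"
      unfolding util_def x_def by simp
    also have "\<dots> = u $ k"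
      using assms by (simp add: surj_f_inv_f)
    finally show ?thesis .
  qed
  then show "util good x (\<chi> j. 1) = u"
    by (simp add: vec_eq_iff)
qed

lemma util_zero: "util good 0 \<beta> = 0"
  by (simp add: util_def vec_eq_iff)

lemma util_add_axis:
  "util good (x + t *\<^sub>R axis i 1) \<beta> = util good x \<beta> + (\<beta>$i * t) *\<^sub>R axis (good i) 1"
proof -
  have "util good (x + t *\<^sub>R axis i 1) \<beta> $ k = (util good x \<beta> + (\<beta>$i * t) *\<^sub>R axis (good i) 1) $ k" for k
  proof -
    have "util good (x + t *\<^sub>R axis i 1) \<beta> $ k
        = (\<Sum>j\<in>{j. good j = k}. \<beta>$j * x$j + (if j = i then \<beta>$i * t else 0))"
      unfolding util_def by (simp add: axis_def algebra_simps, intro sum.cong) auto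
    also have "\<dots> = util good x \<beta> $ k + (\<Sum>j\<in>{j. good j = k}. if j = i then \<beta>$i * t else 0)"
      unfolding util_def by (simp add: sum.distrib)
    also have "\<dots> = (util good x \<beta> + (\<beta>$i * t) *\<^sub>R axis (good i) 1) $ k"
      by (simp add: axis_def)
    finally show ?thesis .
  qed
  then show ?thesis
    by (simp add: vec_eq_iff)
qed

lemma open_vimage_util: "open N \<Longrightarrow> open ((\<lambda>x. util good x \<beta>) -` N)"
  unfolding util_def by (intro open_vimage continuous_on_vec_lambda continuous_intros)

lemma Vfun_util_eq:
  assumes "assm2 good B D \<mu> Y"
  obtains r where "Dbar \<mu> B D (ASFb \<mu> Y x \<beta>) = ereal r" "ASFb \<mu> Y x \<beta> \<in> convex hull B"
    "Vfun \<mu> B D (util good x \<beta>) = ereal (ASFb \<mu> Y x \<beta> \<bullet> util good x \<beta> + r)"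
proof -
  let ?u = "util good x \<beta>" and ?y = "ASFb \<mu> Y x \<beta>"
  have "?y \<in> {y \<in> convex hull B. \<forall>z \<in> convex hull B.
               ereal (z \<bullet> ?u) + Dbar \<mu> B D z \<le> ereal (y \<bullet> ?u) + Dbar \<mu> B D y}"
    using assms unfolding assm2_def by blast
  then have y: "?y \<in> convex hull B"
    and max: "\<And>z. z \<in> convex hull B \<Longrightarrow> ereal (z \<bullet> ?u) + Dbar \<mu> B D z \<le> ereal (?y \<bullet> ?u) + Dbar \<mu> B D ?y"
    by auto
  have V: "Vfun \<mu> B D ?u = ereal (?y \<bullet> ?u) + Dbar \<mu> B D ?y"
    unfolding Vfun_def using y max by (intro Sup_eqI) auto
  obtain y0 where "y0 \<in> convex hull B" "Dbar \<mu> B D y0 \<noteq> -\<infinity>"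
    using assms unfolding assm2_def by blast
  then have "Dbar \<mu> B D ?y \<noteq> -\<infinity>"
    using max[of y0] by auto
  moreover have "Dbar \<mu> B D ?y \<noteq> \<infinity>"
    using assms unfolding assm2_def by blast
  ultimately obtain r where "Dbar \<mu> B D ?y = ereal r"
    by (cases "Dbar \<mu> B D ?y") auto
  with V y show ?thesis
    using that by simp
qed

lemma ASFb_eq_ipd_Vfun:
  assumes A2: "assm2 good B D \<mu> Y" and "surj good"
    and ex: "ipd_exists [k] (\<lambda>u. real_of_ereal (Vfun \<mu> B D u)) (util good x \<beta>)"
  shows "ASFb \<mu> Y x \<beta> $ k = ipd [k] (\<lambda>u. real_of_ereal (Vfun \<mu> B D u)) (util good x \<beta>)"
proof -
  let ?u = "util good x \<beta>" and ?y = "ASFb \<mu> Y x \<beta>" and ?V = "\<lambda>u. real_of_ereal (Vfun \<mu> B D u)"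
  obtain r where r: "Dbar \<mu> B D ?y = ereal r" and y: "?y \<in> convex hull B"
    and V: "Vfun \<mu> B D ?u = ereal (?y \<bullet> ?u + r)"
    using Vfun_util_eq[OF A2] by metis
  \<comment> \<open>as good is onto, every u is a utility index, so ?y is a subgradient of V at ?u\<close>
  have below: "?y \<bullet> v + r \<le> ?V v" for v
  proof -
    obtain x' \<beta>' where "util good x' \<beta>' = v"
      using util_surj[OF \<open>surj good\<close>] by metis
    then obtain r' where "Vfun \<mu> B D v = ereal (ASFb \<mu> Y x' \<beta>' \<bullet> v + r')"
      using Vfun_util_eq[OF A2] by metis
    moreover have "ereal (?y \<bullet> v) + Dbar \<mu> B D ?y \<le> Vfun \<mu> B D v"
      unfolding Vfun_def using y by (intro Sup_upper) blast
    ultimately show ?thesis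
      using r by simp
  qed
  have "?V (?u + 0 *\<^sub>R axis k 1) + t * ?y $ k \<le> ?V (?u + t *\<^sub>R axis k 1)" for t
    using below[of "?u + t *\<^sub>R axis k 1"] V by (simp add: inner_add_right inner_axis)
  from deriv_eq_of_supporting_line[of "\<lambda>t. ?V (?u + t *\<^sub>R axis k 1)", OF _ this]
  show ?thesis
    using ex by simp
qed

lemma ipd_comp_util:
  fixes g :: "real^'k::finite \<Rightarrow> real" and good :: "'d::finite \<Rightarrow> 'k"
  assumes N: "open N" and ex: "\<And>\<delta> u. length \<delta> \<le> n \<Longrightarrow> u \<in> N \<Longrightarrow> ipd_exists \<delta> g u"
    and "length \<gamma> \<le> n" "util good x \<beta> \<in> N"
  shows "ipd \<gamma> (\<lambda>x. g (util good x \<beta>)) x = mono_fn \<gamma> \<beta> * ipd (map good \<gamma>) g (util good x \<beta>)"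
  using assms(3,4)
proof (induction \<gamma> arbitrary: x)
  case Nil
  then show ?case by (simp add: mono_fn_def)
next
  case (Cons i \<gamma>)
  let ?L = "\<lambda>x. util good x \<beta>"
  define \<phi> where "\<phi> s = ipd (map good \<gamma>) g (?L x + s *\<^sub>R axis (good i) 1)" for s
  have "\<forall>\<^sub>F t in nhds 0. x + t *\<^sub>R axis i 1 \<in> ?L -` N"
    using eventually_nhds_line_in_open[OF open_vimage_util[OF N]] Cons.prems(2) by simp
  then have "\<forall>\<^sub>F t in nhds 0. ipd \<gamma> (\<lambda>x. g (?L x)) (x + t *\<^sub>R axis i 1) = mono_fn \<gamma> \<beta> * \<phi> (\<beta>$i * t)"
    by (rule eventually_mono) (use Cons.IH Cons.prems(1) in \<open>simp add: util_add_axis \<phi>_def\<close>)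
  then have "deriv (\<lambda>t. ipd \<gamma> (\<lambda>x. g (?L x)) (x + t *\<^sub>R axis i 1)) 0
      = deriv (\<lambda>t. mono_fn \<gamma> \<beta> * \<phi> (\<beta>$i * t)) 0"
    by (rule deriv_cong_ev) simp
  also have "\<dots> = mono_fn \<gamma> \<beta> * (ipd (good i # map good \<gamma>) g (?L x) * \<beta>$i)"
  proof (rule DERIV_imp_deriv)
    have "ipd_exists (good i # map good \<gamma>) g (?L x + 0 *\<^sub>R axis (good i) 1)"
      using ex[of "good i # map good \<gamma>" "?L x"] Cons.prems by (simp del: ipd_exists.simps)
    from ipd_Cons_has_real_derivative[OF this]
    have "(\<phi> has_real_derivative ipd (good i # map good \<gamma>) g (?L x)) (at (\<beta>$i * 0))"
      unfolding \<phi>_def[abs_def] by simp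
    from DERIV_chain2[OF this DERIV_cmult[OF DERIV_ident, of "\<beta>$i" 0]]
    show "((\<lambda>t. mono_fn \<gamma> \<beta> * \<phi> (\<beta>$i * t)) has_real_derivative
            mono_fn \<gamma> \<beta> * (ipd (good i # map good \<gamma>) g (?L x) * \<beta>$i)) (at 0)"
      using DERIV_cmult by fastforce
  qed
  finally show ?case
    by (simp add: mono_fn_def)
qed

lemma spec_ok_surj_good:
  assumes "spec_ok good j0 Mbar B D \<mu> \<nu> Y" "1 \<le> M" "enat M \<le> Mbar"
  shows "surj good"
proof -
  have "\<exists>j. good j = k" for k
  proof -
    have "assm6 M good \<nu>"
      using assms unfolding spec_ok_def by blast
    then obtain \<gamma> where \<gamma>: "map good \<gamma> = replicate M k"
      unfolding assm6_def by (auto dest: spec[of _ "replicate M k"])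
    then have "\<gamma> \<noteq> []"
      using assms(2) by auto
    then have "good (hd \<gamma>) \<in> set (map good \<gamma>)"
      by simp
    then show ?thesis
      using \<gamma> by auto
  qed
  then show ?thesis
    by (metis surjI)
qed

lemma ipd_ASF_eq_moment_mult:
  fixes good :: "'d::finite \<Rightarrow> 'k::finite"
  assumes S: "spec_ok good j0 Mbar B D \<mu> \<nu> Y" and M: "1 \<le> M" "enat M \<le> Mbar" and len: "length \<gamma> = M"
  shows "ipd \<gamma> (\<lambda>x. ASF \<nu> \<mu> Y x $ k) 0
     = (\<integral>\<beta>. mono_fn \<gamma> \<beta> \<partial>\<nu>) * ipd (map good \<gamma> @ [k]) (\<lambda>u. real_of_ereal (Vfun \<mu> B D u)) 0"
proof -
  let ?V = "\<lambda>u. real_of_ereal (Vfun \<mu> B D u)"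
  have A2: "assm2 good B D \<mu> Y" and A5: "assm5 M B D \<mu> \<nu> Y"
    using S M unfolding spec_ok_def by blast+
  obtain N where N: "open N" "0 \<in> N"
    and smooth: "\<And>\<delta>::'k list. length \<delta> \<le> Suc M \<Longrightarrow> (\<forall>u\<in>N. ipd_exists \<delta> ?V u)"
    using A5 unfolding assm5_def Ck_near_def by blast
  have ex: "ipd_exists \<delta> (ipd [k] ?V) u" if "length \<delta> \<le> M" "u \<in> N" for \<delta> u
    using smooth[of "\<delta> @ [k]"] that by (intro ipd_exists_append) simp
  have per_\<beta>: "ipd \<gamma> (\<lambda>x. ASFb \<mu> Y x \<beta> $ k) 0 = mono_fn \<gamma> \<beta> * ipd (map good \<gamma> @ [k]) ?V 0" for \<beta>
  proof -
    have envelope: "ASFb \<mu> Y x \<beta> $ k = ipd [k] ?V (util good x \<beta>)"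
      if "x \<in> (\<lambda>x. util good x \<beta>) -` N" for x
      using ASFb_eq_ipd_Vfun[OF A2 spec_ok_surj_good[OF S M]] smooth[of "[k]"] that by simp
    have "ipd \<gamma> (\<lambda>x. ASFb \<mu> Y x \<beta> $ k) 0 = ipd \<gamma> (\<lambda>x. ipd [k] ?V (util good x \<beta>)) 0"
      by (rule ipd_cong_open[OF open_vimage_util[OF N(1)] envelope]) (simp_all add: util_zero N(2))
    also have "\<dots> = mono_fn \<gamma> \<beta> * ipd (map good \<gamma>) (ipd [k] ?V) 0"
      using ipd_comp_util[OF N(1) ex, where \<gamma>=\<gamma> and x=0 and \<beta>=\<beta>] len N(2)
      by (simp add: util_zero del: ipd.simps)
    finally show ?thesis
      by (simp only: ipd_append)
  qed
  have "ipd \<gamma> (\<lambda>x. ASF \<nu> \<mu> Y x $ k) 0 = (\<integral>\<beta>. ipd \<gamma> (\<lambda>x. ASFb \<mu> Y x \<beta> $ k) 0 \<partial>\<nu>)"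
    using A5 len unfolding assm5_def by blast
  also have "\<dots> = (\<integral>\<beta>. mono_fn \<gamma> \<beta> \<partial>\<nu>) * ipd (map good \<gamma> @ [k]) ?V 0"
    unfolding per_\<beta> by (rule integral_mult_left_zero)
  finally show ?thesis .
qed

lemma spec_ok_ipd_Vfun_mset_cong:
  assumes "spec_ok good j0 Mbar B D \<mu> \<nu> Y" "1 \<le> M" "enat M \<le> Mbar"
    and "mset xs = mset ys" "length xs = Suc M"
  shows "ipd xs (\<lambda>u. real_of_ereal (Vfun \<mu> B D u)) 0 = ipd ys (\<lambda>u. real_of_ereal (Vfun \<mu> B D u)) 0"
proof (rule swap_invariant_mset_cong[where n = "Suc M"])
  have "Ck_near (Suc M) (\<lambda>u. real_of_ereal (Vfun \<mu> B D u)) 0"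
    using assms(1-3) unfolding spec_ok_def assm5_def by blast
  then show "ipd (pre @ x # y # post) (\<lambda>u. real_of_ereal (Vfun \<mu> B D u)) 0
           = ipd (pre @ y # x # post) (\<lambda>u. real_of_ereal (Vfun \<mu> B D u)) 0"
    if "length (pre @ x # y # post) = Suc M" for pre x y post
    by (rule Ck_near_ipd_swap) (use that in simp)
qed (use assms(4,5) in auto)

(* In the application c1, c2 are the partial derivatives of V at 0 and m1, m2 the moments
   of nu in two specifications; factor is the derivative formula for the ASF. *)
context
  fixes c1 c2 :: "'k list \<Rightarrow> real" and m1 m2 :: "'d list \<Rightarrow> real"
    and good :: "'d \<Rightarrow> 'k" and M :: nat and j0 :: 'd
  assumes factor: "\<And>\<gamma> k. length \<gamma> = M \<Longrightarrow> c1 (map good \<gamma> @ [k]) * m1 \<gamma> = c2 (map good \<gamma> @ [k]) * m2 \<gamma>"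
    and coeff_nonzero: "\<And>ks. length ks = Suc M \<Longrightarrow> c1 ks \<noteq> 0 \<and> c2 ks \<noteq> 0"
    and coeff_mset_cong: "\<And>xs ys. mset xs = mset ys \<Longrightarrow> length xs = Suc M \<Longrightarrow> c1 xs = c1 ys \<and> c2 xs = c2 ys"
    and anchor: "m1 (replicate M j0) \<noteq> 0" "m1 (replicate M j0) = m2 (replicate M j0)"
    and nonzero_moment: "\<And>ks. length ks = M \<Longrightarrow> \<exists>\<gamma>. map good \<gamma> = ks \<and> m1 \<gamma> \<noteq> 0"
begin

lemma coeffs_eq_Cons:
  assumes len: "length (z # ks) = M" and eq: "c1 (ks @ [good j0, z]) = c2 (ks @ [good j0, z])"
  shows "c1 (z # ks @ [k]) = c2 (z # ks @ [k])"
proof -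
  obtain \<gamma> where \<gamma>: "map good \<gamma> = z # ks" "m1 \<gamma> \<noteq> 0"
    using nonzero_moment[OF len] by (elim exE conjE)
  have len_\<gamma>: "length \<gamma> = M"
    using \<gamma>(1) len by (metis length_map)
  have "c1 (z # ks @ [good j0]) = c2 (z # ks @ [good j0])"
    using coeff_mset_cong[of "z # ks @ [good j0]" "ks @ [good j0, z]"] eq len by auto
  then have "m1 \<gamma> = m2 \<gamma>"
    using factor[OF len_\<gamma>, of "good j0"] coeff_nonzero[of "z # ks @ [good j0]"] \<gamma>(1) len by auto
  then show ?thesis
    using factor[OF len_\<gamma>, of k] \<gamma> by simp
qed

lemma coeffs_eq_replicate_suffix:
  "length zs \<le> M \<Longrightarrow>
    c1 (zs @ replicate (M - length zs) (good j0) @ [k]) = c2 (zs @ replicate (M - length zs) (good j0) @ [k])"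
proof (induction zs arbitrary: k)
  case Nil
  show ?case
    using factor[of "replicate M j0" k] anchor by simp
next
  case (Cons z zs)
  let ?ks = "zs @ replicate (M - Suc (length zs)) (good j0)"
  have split: "?ks @ [good j0, z] = zs @ replicate (M - length zs) (good j0) @ [z]"
  proof -
    have "M - length zs = Suc (M - Suc (length zs))"
      using Cons.prems by simp
    then show ?thesis
      by (simp add: replicate_append_same)
  qed
  have "c1 (?ks @ [good j0, z]) = c2 (?ks @ [good j0, z])"
    unfolding split using Cons.IH Cons.prems by simp
  from coeffs_eq_Cons[OF _ this] show ?case
    using Cons.prems by simp
qed

lemma moments_eq_of_factorization:
  assumes "length \<gamma> = M"
  shows "m1 \<gamma> = m2 \<gamma>"
proof -
  have "c1 (map good \<gamma> @ [good j0]) = c2 (map good \<gamma> @ [good j0])"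
    using coeffs_eq_replicate_suffix[of "map good \<gamma>" "good j0"] assms by simp
  then show ?thesis
    using factor[OF assms, of "good j0"] coeff_nonzero[of "map good \<gamma> @ [good j0]"] assms by simp
qed

end

lemma spec_ok_moments_eq:
  assumes S1: "spec_ok good j0 Mbar B1 D1 \<mu>1 \<nu>1 Y1" and S2: "spec_ok good j0 Mbar B2 D2 \<mu>2 \<nu>2 Y2"
    and H: "open H" "0 \<in> H" and ASF_eq: "\<forall>x\<in>H. (\<forall>j. 0 \<le> x$j) \<longrightarrow> ASF \<nu>1 \<mu>1 Y1 x = ASF \<nu>2 \<mu>2 Y2 x"
    and M: "1 \<le> M" "enat M \<le> Mbar"
    and anchor: "(\<integral>\<beta>. (\<beta>$j0) ^ M \<partial>\<nu>1) = (\<integral>\<beta>. (\<beta>$j0) ^ M \<partial>\<nu>2)"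
    and len: "length \<gamma> = M"
  shows "(\<integral>\<beta>. mono_fn \<gamma> \<beta> \<partial>\<nu>1) = (\<integral>\<beta>. mono_fn \<gamma> \<beta> \<partial>\<nu>2)"
proof -
  let ?c1 = "\<lambda>ks. ipd ks (\<lambda>u. real_of_ereal (Vfun \<mu>1 B1 D1 u)) 0"
  let ?c2 = "\<lambda>ks. ipd ks (\<lambda>u. real_of_ereal (Vfun \<mu>2 B2 D2 u)) 0"
  let ?m1 = "\<lambda>\<delta>. \<integral>\<beta>. mono_fn \<delta> \<beta> \<partial>\<nu>1" and ?m2 = "\<lambda>\<delta>. \<integral>\<beta>. mono_fn \<delta> \<beta> \<partial>\<nu>2"
  have A1: "assm4 M j0 \<nu>1" "assm5 M B1 D1 \<mu>1 \<nu>1 Y1" "assm6 M good \<nu>1"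
    using S1 M unfolding spec_ok_def by blast+
  have A2: "assm5 M B2 D2 \<mu>2 \<nu>2 Y2"
    using S2 M unfolding spec_ok_def by blast
  have factor: "?c1 (map good \<delta> @ [k]) * ?m1 \<delta> = ?c2 (map good \<delta> @ [k]) * ?m2 \<delta>"
    if "length \<delta> = M" for \<delta> k
  proof -
    have "ipd_exists \<delta> (\<lambda>x. ASF \<nu>1 \<mu>1 Y1 x $ k) 0" "ipd_exists \<delta> (\<lambda>x. ASF \<nu>2 \<mu>2 Y2 x $ k) 0"
      using A1(2) A2 that unfolding assm5_def by blast+
    from ipd_eq_on_orthant[OF H(1) _ H(2) _ this]
    have "ipd \<delta> (\<lambda>x. ASF \<nu>1 \<mu>1 Y1 x $ k) 0 = ipd \<delta> (\<lambda>x. ASF \<nu>2 \<mu>2 Y2 x $ k) 0"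
      using ASF_eq by simp
    then show ?thesis
      using ipd_ASF_eq_moment_mult[OF S1 M that, of k] ipd_ASF_eq_moment_mult[OF S2 M that, of k]
      by (simp add: mult.commute)
  qed
  have "?c1 ks \<noteq> 0 \<and> ?c2 ks \<noteq> 0" if "length ks = Suc M" for ks
    using A1(2) A2 that unfolding assm5_def by blast
  moreover have "?c1 xs = ?c1 ys \<and> ?c2 xs = ?c2 ys" if "mset xs = mset ys" "length xs = Suc M" for xs ys
    using spec_ok_ipd_Vfun_mset_cong[OF S1 M that] spec_ok_ipd_Vfun_mset_cong[OF S2 M that] by blast
  moreover have "?m1 (replicate M j0) \<noteq> 0" "?m1 (replicate M j0) = ?m2 (replicate M j0)"
    using A1(1) anchor unfolding assm4_def mono_fn_def by simp_all
  moreover have "\<exists>\<delta>. map good \<delta> = ks \<and> ?m1 \<delta> \<noteq> 0" if "length ks = M" for ks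
    using A1(3) that unfolding assm6_def by blast
  ultimately show ?thesis
    using moments_eq_of_factorization[of M ?c1 good ?m1 ?c2 ?m2, OF factor] len by blast
qed

theorem corollary1:
  fixes good :: "'d::finite \<Rightarrow> 'k::finite" and j0 :: 'd and Mbar :: enat
    and B1 :: "(real^'k) set" and D1 :: "real^'k \<Rightarrow> 'e1 \<Rightarrow> ereal" and \<mu>1 :: "'e1 measure"
    and \<nu>1 :: "(real^'d) measure" and Y1 :: "real^'d \<Rightarrow> real^'d \<Rightarrow> 'e1 \<Rightarrow> real^'k"
    and B2 :: "(real^'k) set" and D2 :: "real^'k \<Rightarrow> 'e2 \<Rightarrow> ereal" and \<mu>2 :: "'e2 measure"
    and \<nu>2 :: "(real^'d) measure" and Y2 :: "real^'d \<Rightarrow> real^'d \<Rightarrow> 'e2 \<Rightarrow> real^'k"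
    and H :: "(real^'d) set"
  assumes "1 \<le> Mbar"
    and "spec_ok good j0 Mbar B1 D1 \<mu>1 \<nu>1 Y1"
    and "spec_ok good j0 Mbar B2 D2 \<mu>2 \<nu>2 Y2"
    and "moment_determinate Mbar \<nu>1"
    and "moment_determinate Mbar \<nu>2"
    and "open H" and "0 \<in> H"
    and "\<forall>x\<in>H. (\<forall>j. 0 \<le> x$j) \<longrightarrow> ASF \<nu>1 \<mu>1 Y1 x = ASF \<nu>2 \<mu>2 Y2 x"
    and "\<forall>M. 1 \<le> M \<and> enat M \<le> Mbar \<longrightarrow> (\<integral>\<beta>. (\<beta>$j0) ^ M \<partial>\<nu>1) = (\<integral>\<beta>. (\<beta>$j0) ^ M \<partial>\<nu>2)"
  shows "\<nu>1 = \<nu>2"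
proof -
  have "prob_space \<nu>1" "sets \<nu>1 = sets borel"
    using assms(2) unfolding spec_ok_def assm1_def by blast+
  moreover have "integrable \<nu>1 (mono_fn \<gamma>) \<and> (\<integral>\<beta>. mono_fn \<gamma> \<beta> \<partial>\<nu>1) = (\<integral>\<beta>. mono_fn \<gamma> \<beta> \<partial>\<nu>2)"
    if "1 \<le> length \<gamma> \<and> enat (length \<gamma>) \<le> Mbar" for \<gamma> :: "'d list"
  proof
    show "integrable \<nu>1 (mono_fn \<gamma>)"
      using assms(2) that unfolding spec_ok_def assm5_def by blast
    show "(\<integral>\<beta>. mono_fn \<gamma> \<beta> \<partial>\<nu>1) = (\<integral>\<beta>. mono_fn \<gamma> \<beta> \<partial>\<nu>2)"
      by (rule spec_ok_moments_eq[OF assms(2,3,6,7,8) _ _ _ refl]) (use assms(9) that in auto)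
  qed
  ultimately show ?thesis
    using assms(5) unfolding moment_determinate_def by auto
qed

end
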